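(* For any prefix $p$ and stream type $s$, there is at most one stream type $s'$ such that $\delta_p s \sim s'$. If moreover $p : s$, then such an $s'$ exists.
   Context: Stream types are generated by $s,t ::= 1 \mid \varepsilon \mid s\cdot t \mid s\,\|\,t \mid s+t \mid s^\star$. Prefixes are generated by $p ::= \mathtt{oneEmp} \mid \mathtt{oneFull} \mid \mathtt{epsEmp} \mid \mathtt{par}(p,p') \mid \mathtt{catA}(p) \mid \mathtt{catB}(p,p') \mid \mathtt{sumEmp} \mid \mathtt{inl}(p) \mid \mathtt{inr}(p) \mid \mathtt{starEmp} \mid \mathtt{starDone} \mid \mathtt{stA}(p) \mid \mathtt{stB}(p,p')$. Maximality (inductive): $\mathtt{epsEmp}$, $\mathtt{oneFull}$, $\mathtt{starDone}$ are maximal; $\mathtt{par}(p_1,p_2)$, $\mathtt{catB}(p_1,p_2)$, $\mathtt{stB}(p_1,p_2)$ are maximal if $p_1$ and $p_2$ are; $\mathtt{inl}(p)$, $\mathtt{inr}(p)$ are maximal if $p$ is. Prefix typing $p : s$ (inductive): $\mathtt{epsEmp}:\varepsilon$; $\mathtt{oneEmp}:1$; $\mathtt{oneFull}:1$; $\mathtt{par}(p_1,p_2): s\|t$ if $p_1:s$, $p_2:t$; $\mathtt{catA}(p): s\cdot t$ if $p:s$; $\mathtt{catB}(p_1,p_2): s\cdot t$ if $p_1:s$, $p_1$ maximal, $p_2:t$; $\mathtt{sumEmp}: s+t$; $\mathtt{inl}(p):s+t$ if $p:s$; $\mathtt{inr}(p):s+t$ if $p:t$; $\mathtt{starEmp}:s^\star$;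 $\mathtt{starDone}:s^\star$; $\mathtt{stA}(p):s^\star$ if $p:s$; $\mathtt{stB}(p,p'):s^\star$ if $p:s$, $p$ maximal, $p':s^\star$. The derivative relation $\delta_p s \sim s'$ is defined inductively by: $\delta_{\mathtt{epsEmp}}\varepsilon\sim\varepsilon$; $\delta_{\mathtt{oneEmp}}1\sim 1$; $\delta_{\mathtt{oneFull}}1\sim\varepsilon$; $\delta_{\mathtt{par}(p_1,p_2)}(s\|t)\sim s'\|t'$ if $\delta_{p_1}s\sim s'$ and $\delta_{p_2}t\sim t'$; $\delta_{\mathtt{catA}(p)}(s\cdot t)\sim s'\cdot t$ if $\delta_p s\sim s'$; $\delta_{\mathtt{catB}(p_1,p_2)}(s\cdot t)\sim t'$ if $\delta_{p_2}t\sim t'$; $\delta_{\mathtt{sumEmp}}(s+t)\sim s+t$; $\delta_{\mathtt{inl}(p)}(s+t)\sim s'$ if $\delta_p s\sim s'$; $\delta_{\mathtt{inr}(p)}(s+t)\sim t'$ if $\delta_p t\sim t'$; $\delta_{\mathtt{starEmp}}s^\star\sim s^\star$; $\delta_{\mathtt{starDone}}s^\star\sim\varepsilon$; $\delta_{\mathtt{stA}(p)}s^\star\sim s'\cdot s^\star$ if $\delta_p s\sim s'$; $\delta_{\mathtt{stB}(p,p')}s^\star\sim s'$ if $\delta_{p'}s^\star\sim s'$. *)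

theory Defs
  imports Main
begin

datatype stream_ty = One | Eps | Cat stream_ty stream_ty | Par stream_ty stream_ty
  | Sum stream_ty stream_ty | Star stream_ty

datatype prefix = OneEmp | OneFull | EpsEmp | ParP prefix prefix | CatA prefix
  | CatB prefix prefix | SumEmp | Inl prefix | Inr prefix | StarEmp | StarDone
  | StA prefix | StB prefix prefix

inductive maximal :: "prefix \<Rightarrow> bool" where
  "maximal EpsEmp"
| "maximal OneFull"
| "maximal StarDone"
| "maximal p1 \<Longrightarrow> maximal p2 \<Longrightarrow> maximal (ParP p1 p2)"
| "maximal p1 \<Longrightarrow> maximal p2 \<Longrightarrow> maximal (CatB p1 p2)"
| "maximal p1 \<Longrightarrow> maximal p2 \<Longrightarrow> maximal (StB p1 p2)"
| "maximal p \<Longrightarrow> maximal (Inl p)"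
| "maximal p \<Longrightarrow> maximal (Inr p)"

inductive has_type :: "prefix \<Rightarrow> stream_ty \<Rightarrow> bool" where
  "has_type EpsEmp Eps"
| "has_type OneEmp One"
| "has_type OneFull One"
| "has_type p1 s \<Longrightarrow> has_type p2 t \<Longrightarrow> has_type (ParP p1 p2) (Par s t)"
| "has_type p s \<Longrightarrow> has_type (CatA p) (Cat s t)"
| "has_type p1 s \<Longrightarrow> maximal p1 \<Longrightarrow> has_type p2 t \<Longrightarrow> has_type (CatB p1 p2) (Cat s t)"
| "has_type SumEmp (Sum s t)"
| "has_type p s \<Longrightarrow> has_type (Inl p) (Sum s t)"
| "has_type p t \<Longrightarrow> has_type (Inr p) (Sum s t)"
| "has_type StarEmp (Star s)"
| "has_type StarDone (Star s)"
| "has_type p s \<Longrightarrow> has_type (StA p) (Star s)"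
| "has_type p s \<Longrightarrow> maximal p \<Longrightarrow> has_type p' (Star s) \<Longrightarrow> has_type (StB p p') (Star s)"

inductive deriv :: "prefix \<Rightarrow> stream_ty \<Rightarrow> stream_ty \<Rightarrow> bool" where
  "deriv EpsEmp Eps Eps"
| "deriv OneEmp One One"
| "deriv OneFull One Eps"
| "deriv p1 s s' \<Longrightarrow> deriv p2 t t' \<Longrightarrow> deriv (ParP p1 p2) (Par s t) (Par s' t')"
| "deriv p s s' \<Longrightarrow> deriv (CatA p) (Cat s t) (Cat s' t)"
| "deriv p2 t t' \<Longrightarrow> deriv (CatB p1 p2) (Cat s t) t'"
| "deriv SumEmp (Sum s t) (Sum s t)"
| "deriv p s s' \<Longrightarrow> deriv (Inl p) (Sum s t) s'"
| "deriv p t t' \<Longrightarrow> deriv (Inr p) (Sum s t) t'"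
| "deriv StarEmp (Star s) (Star s)"
| "deriv StarDone (Star s) Eps"
| "deriv p s s' \<Longrightarrow> deriv (StA p) (Star s) (Cat s' (Star s))"
| "deriv p' (Star s) s' \<Longrightarrow> deriv (StB p p') (Star s) s'"

end

theory Submission
  imports Defs
begin

fun derivative :: "prefix \<Rightarrow> stream_ty \<Rightarrow> stream_ty option" where
  "derivative EpsEmp Eps = Some Eps"
| "derivative OneEmp One = Some One"
| "derivative OneFull One = Some Eps"
| "derivative (ParP p1 p2) (Par s t) =
     (case (derivative p1 s, derivative p2 t) of
        (Some s', Some t') \<Rightarrow> Some (Par s' t')
      | _ \<Rightarrow> None)"
| "derivative (CatA p) (Cat s t) = map_option (\<lambda>s'. Cat s' t) (derivative p s)"
| "derivative (CatB p1 p2) (Cat s t) = derivative p2 t"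
| "derivative SumEmp (Sum s t) = Some (Sum s t)"
| "derivative (Inl p) (Sum s t) = derivative p s"
| "derivative (Inr p) (Sum s t) = derivative p t"
| "derivative StarEmp (Star s) = Some (Star s)"
| "derivative StarDone (Star s) = Some Eps"
| "derivative (StA p) (Star s) = map_option (\<lambda>s'. Cat s' (Star s)) (derivative p s)"
| "derivative (StB p p') (Star s) = derivative p' (Star s)"
| "derivative _ _ = None"

lemma deriv_iff_derivative: "deriv p s s' \<longleftrightarrow> derivative p s = Some s'"
proof
  show "deriv p s s' \<Longrightarrow> derivative p s = Some s'"
    by (induction rule: deriv.induct) auto
  show "derivative p s = Some s' \<Longrightarrow> deriv p s s'"
    by (induction p s arbitrary: s' rule: derivative.induct)
      (auto intro: deriv.intros split: option.splits)
qed

lemma deriv_deterministic: "deriv p s s1 \<Longrightarrow> deriv p s s2 \<Longrightarrow> s1 = s2"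
  by (simp add: deriv_iff_derivative)

lemma has_type_derivative_defined: "has_type p s \<Longrightarrow> derivative p s \<noteq> None"
  by (induction rule: has_type.induct) auto

theorem mainTheorem2:
  shows "(\<forall>p s s1 s2. deriv p s s1 \<longrightarrow> deriv p s s2 \<longrightarrow> s1 = s2)
       \<and> (\<forall>p s. has_type p s \<longrightarrow> (\<exists>s'. deriv p s s'))"
  using deriv_deterministic has_type_derivative_defined
  by (auto simp: deriv_iff_derivative)

end
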